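(* Fix $\sigma\in\mathbb{R}$ and $k,d\in\mathbb{Z}_{\ge0}$. Then $\mathrm{span}_{\mathbb{Q}}(L^o_{k,d}(\sigma))=\mathrm{span}_{\mathbb{Q}}(M^o_{k,d}(\sigma))$ and $\mathrm{span}_{\mathbb{Q}}(L^e_{k,d}(\sigma))=\mathrm{span}_{\mathbb{Q}}(M^e_{k,d}(\sigma))$.
   Context: $A(\theta)=\log|2\sin(\theta/2)|$, $\mathrm{Ls}_{\mathbf{k}}^{\mathbf{l}}(\sigma)=(-1)^n\int_0^{\sigma}\int_0^{\theta_n}\cdots\int_0^{\theta_2}\prod_{u=1}^n\theta_u^{l_u}A(\theta_u)^{k_u-1-l_u}\,d\theta_1\cdots d\theta_n$, $\mathrm{Ls}_\emptyset^\emptyset=1$. For $\mathbf{k}=(k_1,\dots,k_n)$, $\mathbf{l}=(l_1,\dots,l_n)$ put $s(\mathbf{k},\mathbf{l})=\sum_u(k_u-1-l_u)$ ($=0$ if $n=0$). $L^o_{k,d}(\sigma)$ (resp. $L^e_{k,d}(\sigma)$) is the set of real numbers $\mathrm{Ls}_{\mathbf{k}}^{\mathbf{l}}(\sigma)$ with $0\le n\le k$, $k_1+\dots+k_n=k$, $k_u\ge1$, $l_u\ge0$, $k_u-1-l_u\ge0$, $s(\mathbf{k},\mathbf{l})\le d$ and $s(\mathbf{k},\mathbf{l})$ odd (resp. even). $M^o_{k,d}(\sigma)$ (resp. $M^e_{k,d}(\sigma)$) is the set of real numbers $\sigma^m\mathrm{Ls}_{\mathbf{k}}^{\mathbf{l}}(\sigma)$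 with $m\ge0$, $m+k_1+\dots+k_n=k$, $0\le n\le k$, $k_u\ge2$, $l_u\ge0$, $k_u-1-l_u\ge1$, $s(\mathbf{k},\mathbf{l})\le d$ and $s(\mathbf{k},\mathbf{l})$ odd (resp. even). *)

theory Defs
  imports "HOL-Analysis.Analysis"
begin

definition Afun :: "real \<Rightarrow> real" where
  "Afun \<theta> = ln \<bar>2 * sin (\<theta> / 2)\<bar>"

text \<open>Iterated integral, outermost integrand first:
  itint [g_n, ..., g_1] x = int_0^x g_n(t_n) int_0^{t_n} ... int_0^{t_2} g_1(t_1) dt_1 ... dt_n.
  Oriented integrals (LBINT over 0..x is negative of LBINT over x..0 when x < 0).\<close>
fun itint :: "(real \<Rightarrow> real) list \<Rightarrow> real \<Rightarrow> real" where
  "itint [] x = 1"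
| "itint (g # gs) x = (LBINT t=ereal 0..ereal x. g t * itint gs t)"

definition lsint :: "nat \<Rightarrow> nat \<Rightarrow> real \<Rightarrow> real" where
  "lsint k l \<theta> = \<theta> ^ l * Afun \<theta> ^ (k - 1 - l)"

text \<open>Ls_ks^ls(sigma), ks = (k_1..k_n), ls = (l_1..l_n), theta_1 innermost.\<close>
definition Ls :: "nat list \<Rightarrow> nat list \<Rightarrow> real \<Rightarrow> real" where
  "Ls ks ls \<sigma> = (-1) ^ length ks * itint (rev (map2 lsint ks ls)) \<sigma>"

definition sdeg :: "nat list \<Rightarrow> nat list \<Rightarrow> nat" where
  "sdeg ks ls = (\<Sum>u<length ks. ks ! u - 1 - ls ! u)"

definition Lset :: "bool \<Rightarrow> nat \<Rightarrow> nat \<Rightarrow> real \<Rightarrow> real set" where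
  "Lset oddp k d \<sigma> = {Ls ks ls \<sigma> | ks ls.
      length ls = length ks \<and> length ks \<le> k \<and> sum_list ks = k \<and>
      (\<forall>u<length ks. 1 \<le> ks ! u \<and> ls ! u + 1 \<le> ks ! u) \<and>
      sdeg ks ls \<le> d \<and> odd (sdeg ks ls) = oddp}"

definition Mset :: "bool \<Rightarrow> nat \<Rightarrow> nat \<Rightarrow> real \<Rightarrow> real set" where
  "Mset oddp k d \<sigma> = {\<sigma> ^ m * Ls ks ls \<sigma> | m ks ls.
      m + sum_list ks = k \<and> length ls = length ks \<and> length ks \<le> k \<and>
      (\<forall>u<length ks. 2 \<le> ks ! u \<and> ls ! u + 2 \<le> ks ! u) \<and>
      sdeg ks ls \<le> d \<and> odd (sdeg ks ls) = oddp}"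

definition qspan :: "real set \<Rightarrow> real set" where
  "qspan S = {x. \<exists>F c. finite F \<and> F \<subseteq> S \<and> (\<forall>s\<in>F. c s \<in> \<rat>) \<and> x = (\<Sum>s\<in>F. c s * s)}"

end

theory Submission
  imports Defs
begin

(* A letter (a, j) stands for the integrand t^a A(t)^j, and a word for the iterated integral of its
   letters; Ls is such an integral up to sign, with weight k and A-degree s(k, l). Integration by
   parts against t^b gives

     x^(b+1)/(b+1) I(p w)(x) = I((b,0) p w)(x) + int_0^x letter_p(t) t^(b+1)/(b+1) I(w)(t) dt.

   Read from left to right and iterated along the word, this writes sigma^m I(w)(sigma) as a
   Q-combination of iterated integrals; read backwards it removes every letter (b, 0) without a
   factor A, at the cost of powers of sigma. Both directions preserve weight and A-degree, which
   gives the two inclusions. The analytic input is that A^j is locally integrable, because near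
   its singularities 2 pi m it is dominated by 1 / sqrt |t - 2 pi m|. *)

section \<open>Local integrability of powers of \<open>A\<close>\<close>

lemma inverse_sqrt_dist_integrable:
  fixes a b c :: real
  shows "(\<lambda>t. inverse (sqrt \<bar>t - c\<bar>)) integrable_on {a..b}"
proof (cases "a \<le> b")
  case True
  have "((\<lambda>t. inverse (sqrt \<bar>t - c\<bar>)) has_integral 2 * sqrt (b - c) - 2 * sqrt (a - c)) {a..b}"
  proof (rule fundamental_theorem_of_calculus_interior_strong[where S = "{c}"])
    fix x assume "x \<in> {a<..<b} - {c}"
    then have "x - c \<noteq> 0" by simp
    then have "DERIV sqrt (x - c) :> inverse (sqrt \<bar>x - c\<bar>) / 2"
      by (rule DERIV_real_sqrt_generic)
         (auto simp: abs_real_def real_sqrt_minus[of "c - x", simplified])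
    then have "((\<lambda>t. sqrt (t - c)) has_real_derivative inverse (sqrt \<bar>x - c\<bar>) / 2 * 1) (at x)"
      by (rule DERIV_chain2[where f = sqrt]) (auto intro!: derivative_eq_intros)
    from DERIV_cmult[OF this, of 2]
    have "((\<lambda>t. 2 * sqrt (t - c)) has_real_derivative inverse (sqrt \<bar>x - c\<bar>)) (at x)"
      by simp
    then show "((\<lambda>t. 2 * sqrt (t - c)) has_vector_derivative inverse (sqrt \<bar>x - c\<bar>)) (at x)"
      by (simp add: has_real_derivative_iff_has_vector_derivative)
  qed (use True in \<open>auto intro!: continuous_intros\<close>)
  then show ?thesis by blast
qed (simp add: integrable_on_empty)

lemma abs_sin_ge_min:
  fixes u :: real
  assumes "\<bar>u\<bar> \<le> pi / 2"
  shows "min \<bar>u\<bar> 1 / 2 \<le> \<bar>sin u\<bar>"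
proof -
  have near_zero: "\<bar>v\<bar> / 2 \<le> \<bar>sin v\<bar>" if "\<bar>v\<bar> \<le> 1" for v :: real
  proof -
    have "\<bar>sin v - (\<Sum>m<3. sin_coeff m * v ^ m)\<bar> \<le> inverse (fact 3) * \<bar>v\<bar> ^ 3"
      by (rule Maclaurin_sin_bound)
    moreover have "(\<Sum>m<3. sin_coeff m * v ^ m) = v"
      by (simp add: eval_nat_numeral sin_coeff_def)
    moreover have "\<bar>v\<bar> ^ 3 \<le> \<bar>v\<bar>"
    proof -
      have "v\<^sup>2 \<le> 1" using that by (simp add: abs_square_le_1)
      then show ?thesis
        by (simp add: power3_eq_cube power2_eq_square mult_left_le_one_le)
    qed
    ultimately have "\<bar>sin v - v\<bar> \<le> \<bar>v\<bar> / 6" by (simp add: eval_nat_numeral)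
    then show ?thesis by linarith
  qed
  show ?thesis
  proof (cases "\<bar>u\<bar> \<le> 1")
    case True
    then show ?thesis using near_zero by simp
  next
    case False
    have "1 / 2 \<le> sin (1::real)" using near_zero[of 1] sin_gt_zero[of 1] pi_gt3 by simp
    also have "sin 1 \<le> sin \<bar>u\<bar>" using False assms pi_gt3 by (subst sin_mono_le_eq) auto
    also have "sin \<bar>u\<bar> = \<bar>sin u\<bar>" using False assms sin_ge_zero[of "\<bar>u\<bar>"]
      by (cases "0 \<le> u") auto
    finally show ?thesis using False by simp
  qed
qed

lemma minus_ln_le_powr:
  fixes y n :: real
  assumes "0 < y" "0 < n"
  shows "- ln y \<le> n * y powr (- 1 / n)"
proof -
  have "ln (y powr (- 1 / n)) \<le> y powr (- 1 / n) - 1"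
    using assms by (intro ln_le_minus_one) simp
  then have "- ln y / n \<le> y powr (- 1 / n)"
    using assms by (simp add: ln_powr)
  then show ?thesis using assms by (simp add: field_simps)
qed

lemma minus_ln_power_le:
  fixes y :: real and j :: nat
  assumes "0 < y" "y \<le> 1" "0 < j"
  shows "(- ln y) ^ j \<le> (2 * j) ^ j / sqrt y"
proof -
  have "(- ln y) ^ j \<le> (2 * j * y powr (- 1 / (2 * j))) ^ j"
    using assms minus_ln_le_powr[of y "2 * j"] by (intro power_mono) auto
  also have "\<dots> = (2 * j) ^ j * y powr (- 1 / 2)"
    using assms by (simp add: power_mult_distrib powr_realpow[symmetric] powr_powr)
  also have "y powr (- 1 / 2) = 1 / sqrt y"
    using assms by (simp add: powr_minus_divide powr_half_sqrt)
  finally show ?thesis by simp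
qed

lemma nearest_multiple_2pi_le_abs_sin:
  fixes t :: real and N :: nat
  assumes "\<bar>2 * sin (t / 2)\<bar> < 1" "\<bar>t\<bar> \<le> 2 * pi * N"
  obtains m :: int where "m \<in> {- int N..int N}" "\<bar>t - 2 * pi * m\<bar> \<le> 2 * \<bar>2 * sin (t / 2)\<bar>"
proof
  define m where "m = round (t / (2 * pi))"
  define u where "u = t / 2 - m * pi"
  have round: "\<bar>m - t / (2 * pi)\<bar> \<le> 1 / 2" unfolding m_def by (rule of_int_round_abs_le)
  then have u_le: "\<bar>u\<bar> \<le> pi / 2" unfolding u_def by (simp add: field_simps abs_le_iff)
  have "\<bar>t / (2 * pi)\<bar> \<le> N"
    using assms(2) by (simp add: abs_divide field_simps)
  with round have "\<bar>real_of_int m\<bar> \<le> N + 1 / 2" by linarith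
  then show "m \<in> {- int N..int N}" by auto
  have "sin (t / 2) = sin (u + pi * m)" by (simp add: u_def)
  also have "\<dots> = sin u * cos (pi * m)" by (simp add: sin_add sin_zero_iff_int2 mult.commute)
  finally have "min \<bar>u\<bar> 1 \<le> \<bar>2 * sin (t / 2)\<bar>"
    using abs_sin_ge_min[OF u_le] by (simp add: abs_mult)
  then have "\<bar>u\<bar> \<le> \<bar>2 * sin (t / 2)\<bar>" using assms(1) by linarith
  moreover have "t - 2 * pi * m = 2 * u" unfolding u_def by (simp add: algebra_simps)
  ultimately show "\<bar>t - 2 * pi * m\<bar> \<le> 2 * \<bar>2 * sin (t / 2)\<bar>" by (simp add: abs_mult)
qed

lemma abs_Afun_power_le:
  fixes t :: real and j N :: nat
  assumes "0 < j" "\<bar>t\<bar> \<le> 2 * pi * N"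
  shows "\<bar>Afun t\<bar> ^ j \<le>
    1 + 2 * (2 * j) ^ j * (\<Sum>m\<in>{- int N..int N}. inverse (sqrt \<bar>t - 2 * pi * m\<bar>))"
    (is "_ \<le> 1 + ?C * ?S")
proof -
  have "0 \<le> ?C * ?S" by (intro mult_nonneg_nonneg sum_nonneg) auto
  define y where "y = \<bar>2 * sin (t / 2)\<bar>"
  have A: "Afun t = ln y" by (simp add: Afun_def y_def)
  consider "y = 0" | "1 \<le> y" | "0 < y" "y < 1" unfolding y_def by linarith
  then show ?thesis
  proof cases
    case 1
    \<comment> \<open>at the zeros of the sine \<open>Afun\<close> takes the junk value \<open>ln 0 = 0\<close>\<close>
    then have "\<bar>Afun t\<bar> ^ j = 0" using A \<open>0 < j\<close> by simp
    then show ?thesis using \<open>0 \<le> ?C * ?S\<close> by linarith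
  next
    case 2
    have "ln y \<le> ln 2" using 2 by (simp add: y_def abs_mult)
    moreover have "\<bar>Afun t\<bar> = ln y" using A 2 by simp
    ultimately have "\<bar>Afun t\<bar> \<le> 1" using ln_2_less_1 by linarith
    then have "\<bar>Afun t\<bar> ^ j \<le> 1" by (simp add: power_le_one)
    then show ?thesis using \<open>0 \<le> ?C * ?S\<close> by linarith
  next
    case 3
    obtain m where m: "m \<in> {- int N..int N}" "\<bar>t - 2 * pi * m\<bar> \<le> 2 * y"
      using nearest_multiple_2pi_le_abs_sin[of t N] 3 assms(2) unfolding y_def by blast
    define d where "d = \<bar>t - 2 * pi * m\<bar>"
    have "0 < d"
    proof (rule ccontr)
      assume "\<not> 0 < d"
      then have "t / 2 = m * pi" by (simp add: d_def)
      then show False using 3 by (simp add: y_def sin_zero_iff_int2)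
    qed
    have "sqrt 4 = (2::real)" by (rule real_sqrt_unique) auto
    then have "sqrt d \<le> 2 * sqrt y"
      using real_sqrt_le_mono[of d "4 * y"] m(2) 3 by (simp add: d_def real_sqrt_mult)
    then have "1 / sqrt y \<le> 2 * inverse (sqrt d)"
      using \<open>0 < d\<close> 3 by (simp add: field_simps)
    moreover have "inverse (sqrt d) \<le> ?S"
      unfolding d_def by (rule member_le_sum[OF m(1)]) auto
    ultimately have "1 / sqrt y \<le> 2 * ?S" by linarith
    have "\<bar>Afun t\<bar> ^ j = (- ln y) ^ j" using A 3 by simp
    also have "\<dots> \<le> (2 * j) ^ j * (1 / sqrt y)"
      using minus_ln_power_le[of y j] 3 assms by simp
    also have "\<dots> \<le> (2 * j) ^ j * (2 * ?S)"
      using \<open>1 / sqrt y \<le> 2 * ?S\<close> by (intro mult_left_mono) auto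
    finally show ?thesis by simp
  qed
qed

definition locally_integrable :: "(real \<Rightarrow> real) \<Rightarrow> bool" where
  "locally_integrable f \<longleftrightarrow> (\<forall>a b. set_integrable lborel {a..b} f)"

lemma set_integrable_lborel_if_absolutely_integrable_on:
  fixes f :: "real \<Rightarrow> real"
  assumes "f absolutely_integrable_on S" "f \<in> borel_measurable borel" "S \<in> sets borel"
  shows "set_integrable lborel S f"
proof -
  have "(\<lambda>x. indicator S x *\<^sub>R f x) \<in> borel_measurable lborel"
    using assms(2,3) by measurable
  from integrable_completion[OF this] show ?thesis
    using assms(1) unfolding set_integrable_def by simp
qed

lemma borel_measurable_Afun [measurable]: "Afun \<in> borel_measurable borel"
  unfolding Afun_def[abs_def] by measurable

lemma locally_integrable_Afun_power: "locally_integrable (\<lambda>t. Afun t ^ j)"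
  unfolding locally_integrable_def
proof (intro allI)
  fix a b :: real
  show "set_integrable lborel {a..b} (\<lambda>t. Afun t ^ j)"
  proof (cases "j = 0")
    case True
    then show ?thesis by (simp add: borel_integrable_atLeastAtMost')
  next
    case False
    define N where "N = nat \<lceil>(\<bar>a\<bar> + \<bar>b\<bar>) / (2 * pi)\<rceil>"
    define D where "D t = 1 + 2 * (2 * real j) ^ j *
      (\<Sum>m\<in>{- int N..int N}. inverse (sqrt \<bar>t - 2 * pi * m\<bar>))" for t
    have sum_int: "(\<lambda>t. \<Sum>m\<in>{- int N..int N}. inverse (sqrt \<bar>t - 2 * pi * m\<bar>)) integrable_on {a..b}"
      by (intro integrable_sum finite_atLeastAtMost_int ballI inverse_sqrt_dist_integrable)
    have "D integrable_on {a..b}"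
      unfolding D_def by (intro integrable_add integrable_const_ivl integrable_on_cmult_left[OF sum_int, simplified])
    moreover have "norm (Afun t ^ j) \<le> D t" if "t \<in> {a..b}" for t
    proof -
      have "\<bar>t\<bar> \<le> 2 * pi * ((\<bar>a\<bar> + \<bar>b\<bar>) / (2 * pi))" using that by auto
      also have "\<dots> \<le> 2 * pi * N" unfolding N_def
        by (intro mult_left_mono) (auto simp: real_nat_ceiling_ge)
      finally show ?thesis
        using abs_Afun_power_le[of j t N] False unfolding D_def by (simp add: power_abs)
    qed
    ultimately have "(\<lambda>t. Afun t ^ j) absolutely_integrable_on {a..b}"
      by (intro measurable_bounded_by_integrable_imp_absolutely_integrable measurable_restrict_space1
          measurable_completion) auto
    then show ?thesis by (rule set_integrable_lborel_if_absolutely_integrable_on) auto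
  qed
qed

section \<open>Indefinite integrals of locally integrable functions\<close>

lemma locally_integrable_continuous: "continuous_on UNIV f \<Longrightarrow> locally_integrable f"
  unfolding locally_integrable_def
  by (auto intro: borel_integrable_atLeastAtMost' continuous_on_subset)

lemma locally_integrable_continuous_mult:
  assumes f: "locally_integrable f" and g: "continuous_on UNIV g"
  shows "locally_integrable (\<lambda>t. g t * f t)"
  unfolding locally_integrable_def
proof (intro allI)
  fix a b :: real
  obtain B where B: "\<And>t. t \<in> {a..b} \<Longrightarrow> \<bar>g t\<bar> \<le> B"
    using compact_imp_bounded[OF compact_continuous_image[OF continuous_on_subset[OF g]]]
    by (fastforce simp: bounded_iff)
  have fi: "set_integrable lborel {a..b} f" using f unfolding locally_integrable_def by blast
  show "set_integrable lborel {a..b} (\<lambda>t. g t * f t)"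
  proof (rule set_integrable_bound[where f = "\<lambda>t. B * f t"])
    show "set_integrable lborel {a..b} (\<lambda>t. B * f t)"
      using fi by (rule set_integrable_mult_right)
    have "(\<lambda>x. g x * (indicator {a..b} x *\<^sub>R f x)) \<in> borel_measurable lborel"
      using borel_measurable_continuous_onI[OF g] borel_measurable_integrable[OF fi[unfolded set_integrable_def]]
      by measurable
    then show "set_borel_measurable lborel {a..b} (\<lambda>t. g t * f t)"
      unfolding set_borel_measurable_def by (simp add: indicator_scaleR_eq_if mult_ac)
    show "AE x in lborel. x \<in> {a..b} \<longrightarrow> norm (g x * f x) \<le> norm (B * f x)"
    proof (intro AE_I2 impI)
      fix x assume "x \<in> {a..b}"
      then have "\<bar>g x\<bar> \<le> \<bar>B\<bar>" using B by force
      then show "norm (g x * f x) \<le> norm (B * f x)" by (simp add: abs_mult mult_right_mono)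
    qed
  qed
qed

lemma interval_lebesgue_integrable_if_locally_integrable:
  "locally_integrable f \<Longrightarrow> interval_lebesgue_integrable lborel (ereal a) (ereal b) f"
  unfolding interval_lebesgue_integrable_def locally_integrable_def
  by (auto intro: set_integrable_subset[where A = "{a..b}"] set_integrable_subset[where A = "{b..a}"])

lemma LBINT_locally_integrable_add:
  assumes "locally_integrable f"
  shows "(LBINT t=ereal a..ereal b. f t) + (LBINT t=ereal b..ereal c. f t) = (LBINT t=ereal a..ereal c. f t)"
proof (rule interval_integral_sum)
  have "min (ereal a) (min (ereal b) (ereal c)) = ereal (min a (min b c))"
    "max (ereal a) (max (ereal b) (ereal c)) = ereal (max a (max b c))"
    by (simp_all add: min_def max_def)
  then show "interval_lebesgue_integrable lborel (min (ereal a) (min (ereal b) (ereal c)))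
      (max (ereal a) (max (ereal b) (ereal c))) f"
    using interval_lebesgue_integrable_if_locally_integrable[OF assms] by presburger
qed

lemma LBINT_from_0_eq_integral:
  assumes "locally_integrable f" "R \<ge> 0" "-R \<le> x"
  shows "(LBINT t=ereal 0..ereal x. f t) = integral {-R..x} f - integral {-R..0} f"
proof -
  have "integral {-R..y} f = (LBINT t=ereal (-R)..ereal y. f t)" if "-R \<le> y" for y
    using that assms(1) unfolding locally_integrable_def
    by (intro interval_integral_eq_integral[symmetric]) auto
  then show ?thesis
    using assms LBINT_locally_integrable_add[OF assms(1), of "-R" 0 x] by simp
qed

lemma continuous_on_LBINT:
  assumes "locally_integrable f"
  shows "continuous_on UNIV (\<lambda>x. LBINT t=ereal 0..ereal x. f t)"
proof (rule continuous_at_imp_continuous_on, intro ballI)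
  fix x :: real
  define R where "R = \<bar>x\<bar> + 1"
  have R: "0 \<le> R" unfolding R_def by simp
  have "f integrable_on {-R..R}"
    using assms unfolding locally_integrable_def by (auto intro: set_borel_integral_eq_integral(1))
  then have "continuous_on {-R..R} (\<lambda>u. integral {-R..u} f - integral {-R..0} f)"
    by (intro continuous_intros indefinite_integral_continuous_1)
  then have "continuous_on {-R..R} (\<lambda>u. LBINT t=ereal 0..ereal u. f t)"
    by (rule continuous_on_eq) (auto simp: LBINT_from_0_eq_integral[OF assms R])
  moreover have "x \<in> interior {-R..R}" unfolding R_def by auto
  ultimately show "isCont (\<lambda>u. LBINT t=ereal 0..ereal u. f t) x"
    using continuous_on_interior by blast
qed

lemma LBINT_has_real_derivative:
  assumes "locally_integrable f" "isCont f x"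
  shows "((\<lambda>u. LBINT t=ereal 0..ereal u. f t) has_real_derivative f x) (at x)"
proof -
  define R where "R = \<bar>x\<bar> + 1"
  have R: "0 \<le> R" and x: "-R < x" "x < R" unfolding R_def by auto
  have "f integrable_on {-R..R}"
    using assms unfolding locally_integrable_def by (auto intro: set_borel_integral_eq_integral(1))
  then have "((\<lambda>u. integral {-R..u} f) has_vector_derivative f x) (at x within {-R..R} - {})"
    using x assms(2) by (intro integral_has_vector_derivative_continuous_at)
      (auto intro: continuous_at_imp_continuous_within)
  then have "((\<lambda>u. integral {-R..u} f - integral {-R..0} f) has_real_derivative f x) (at x)"
    using x by (auto simp: has_real_derivative_iff_has_vector_derivative at_within_Icc_at
        intro!: derivative_eq_intros)
  then show ?thesis
  proof (rule has_field_derivative_transform_within_open[where S = "{-R<..<R}"])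
    show "\<And>u. u \<in> {-R<..<R} \<Longrightarrow> integral {-R..u} f - integral {-R..0} f = (LBINT t=ereal 0..ereal u. f t)"
      by (simp add: LBINT_from_0_eq_integral[OF assms(1) R])
  qed (use x in auto)
qed

lemma DERIV_zero_off_locally_finite_constant:
  fixes G :: "real \<Rightarrow> real"
  assumes "continuous_on UNIV G" "\<And>t. t \<notin> Z \<Longrightarrow> DERIV G t :> 0" "\<And>R. finite (Z \<inter> {-R..R})"
  shows "G x = G y"
proof -
  define R where "R = \<bar>x\<bar> + \<bar>y\<bar> + 1"
  obtain C where C: "\<And>z. z \<in> {-R<..<R} \<Longrightarrow> G z = C"
  proof (rule DERIV_zero_connected_constant[of "{-R<..<R}" "Z \<inter> {-R<..<R}" G])
    show "finite (Z \<inter> {-R<..<R})"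
      using assms(3)[of R] by (rule finite_subset[rotated]) auto
    show "continuous_on {-R<..<R} G" using assms(1) by (rule continuous_on_subset) simp
    show "\<forall>z\<in>{-R<..<R} - Z \<inter> {-R<..<R}. DERIV G z :> 0" using assms(2) by blast
  qed auto
  have "x \<in> {-R<..<R}" "y \<in> {-R<..<R}" unfolding R_def by auto
  then show ?thesis using C by metis
qed

lemma indefinite_LBINT_by_parts:
  fixes g g' h :: "real \<Rightarrow> real" and Z :: "real set"
  assumes h: "locally_integrable h"
    and Z: "\<And>R. finite (Z \<inter> {-R..R})" "\<And>t. t \<notin> Z \<Longrightarrow> isCont h t"
    and g: "\<And>t. (g has_real_derivative g' t) (at t)" "continuous_on UNIV g'"
  shows "g x * (LBINT t=ereal 0..ereal x. h t) =
    (LBINT t=ereal 0..ereal x. g' t * (LBINT s=ereal 0..ereal t. h s)) +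
    (LBINT t=ereal 0..ereal x. g t * h t)"
proof -
  define H where "H x = (LBINT t=ereal 0..ereal x. h t)" for x
  have gc: "continuous_on UNIV g"
    using g(1) by (intro continuous_at_imp_continuous_on) (auto intro: DERIV_isCont)
  have Hc: "continuous_on UNIV H" unfolding H_def by (rule continuous_on_LBINT[OF h])
  have l1: "locally_integrable (\<lambda>t. g' t * H t)"
    by (intro locally_integrable_continuous continuous_intros g Hc)
  have l2: "locally_integrable (\<lambda>t. g t * h t)" by (rule locally_integrable_continuous_mult[OF h gc])
  define G where "G x = g x * H x - (LBINT t=ereal 0..ereal x. g' t * H t) -
    (LBINT t=ereal 0..ereal x. g t * h t)" for x
  have "continuous_on UNIV G"
    unfolding G_def by (intro continuous_intros gc Hc continuous_on_LBINT l1 l2)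
  moreover have "DERIV G t :> 0" if "t \<notin> Z" for t
  proof -
    have cont: "isCont g t" "isCont g' t" "isCont H t" "isCont h t"
      using gc g(2) Hc Z(2)[OF that] by (simp_all add: continuous_on_eq_continuous_at)
    have "(H has_real_derivative h t) (at t)"
      unfolding H_def by (rule LBINT_has_real_derivative[OF h cont(4)])
    moreover have "((\<lambda>x. LBINT s=ereal 0..ereal x. g' s * H s) has_real_derivative g' t * H t) (at t)"
      using cont by (intro LBINT_has_real_derivative[OF l1] continuous_intros)
    moreover have "((\<lambda>x. LBINT s=ereal 0..ereal x. g s * h s) has_real_derivative g t * h t) (at t)"
      using cont by (intro LBINT_has_real_derivative[OF l2] continuous_intros)
    ultimately have "(G has_real_derivative
        (g' t * H t + h t * g t) - g' t * H t - g t * h t) (at t)"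
      unfolding G_def by (intro DERIV_diff DERIV_mult g(1))
    then show ?thesis by (simp add: mult.commute)
  qed
  ultimately have "G x = G 0"
    using Z(1) by (rule DERIV_zero_off_locally_finite_constant)
  then show ?thesis by (simp add: G_def H_def)
qed

section \<open>Iterated integrals of words\<close>

type_synonym word = "(nat \<times> nat) list"

fun letter :: "nat \<times> nat \<Rightarrow> real \<Rightarrow> real" where
  "letter (a, j) t = t ^ a * Afun t ^ j"

definition integrate_letter :: "nat \<times> nat \<Rightarrow> (real \<Rightarrow> real) \<Rightarrow> real \<Rightarrow> real" where
  "integrate_letter p f x = (LBINT t=ereal 0..ereal x. letter p t * f t)"

definition word_integral :: "word \<Rightarrow> real \<Rightarrow> real" where
  "word_integral w = itint (map letter w)"

lemma word_integral_Nil [simp]: "word_integral [] = (\<lambda>_. 1)"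
  by (simp add: word_integral_def fun_eq_iff)

lemma word_integral_Cons: "word_integral (p # w) = integrate_letter p (word_integral w)"
  by (simp add: word_integral_def integrate_letter_def fun_eq_iff)

lemma locally_integrable_letter_mult:
  assumes "continuous_on UNIV f"
  shows "locally_integrable (\<lambda>t. letter p t * f t)"
proof -
  obtain a j where p: "p = (a, j)" by fastforce
  have "locally_integrable (\<lambda>t. (t ^ a * f t) * Afun t ^ j)"
    by (intro locally_integrable_continuous_mult locally_integrable_Afun_power continuous_intros assms)
  then show ?thesis by (simp add: p mult_ac)
qed

lemma continuous_on_integrate_letter:
  "continuous_on UNIV f \<Longrightarrow> continuous_on UNIV (integrate_letter p f)"
  unfolding integrate_letter_def[abs_def]
  by (intro continuous_on_LBINT locally_integrable_letter_mult)

lemma continuous_on_word_integral: "continuous_on UNIV (word_integral w)"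
  by (induction w) (simp_all add: word_integral_Cons continuous_on_integrate_letter)

lemma integrate_letter_linear:
  assumes "continuous_on UNIV f" "continuous_on UNIV g"
  shows "integrate_letter p (\<lambda>t. c * f t + g t) x = c * integrate_letter p f x + integrate_letter p g x"
proof -
  have "(\<lambda>t. letter p t * (c * f t + g t)) = (\<lambda>t. c * (letter p t * f t) + letter p t * g t)"
    by (simp add: fun_eq_iff algebra_simps)
  then show ?thesis
    unfolding integrate_letter_def using assms
    by (simp add: interval_lebesgue_integrable_if_locally_integrable locally_integrable_letter_mult)
qed

lemma integrate_letter_scale: "integrate_letter p (\<lambda>t. c * f t) x = c * integrate_letter p f x"
  unfolding integrate_letter_def by (simp add: mult.left_commute)

lemma integrate_letter_power_mult:
  "integrate_letter (a, j) (\<lambda>t. t ^ m * f t) = integrate_letter (a + m, j) f"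
  unfolding integrate_letter_def by (simp add: fun_eq_iff power_add mult_ac)

lemma isCont_letter:
  assumes "t \<notin> range (\<lambda>m::int. 2 * pi * m)"
  shows "isCont (letter p) t"
proof -
  obtain a j where p: "p = (a, j)" by fastforce
  have "sin (t / 2) \<noteq> 0"
    using assms by (auto simp: sin_zero_iff_int2 field_simps)
  then have "isCont Afun t" unfolding Afun_def[abs_def] by (intro continuous_intros) auto
  then have "isCont (\<lambda>t. t ^ a * Afun t ^ j) t" by (intro continuous_intros)
  moreover have "letter p = (\<lambda>t. t ^ a * Afun t ^ j)" by (simp add: p fun_eq_iff)
  ultimately show ?thesis by simp
qed

lemma finite_multiples_2pi_bounded: "finite (range (\<lambda>m::int. 2 * pi * m) \<inter> {-R..R})"
proof (rule finite_subset)
  show "range (\<lambda>m::int. 2 * pi * m) \<inter> {-R..R} \<subseteq> (\<lambda>m::int. 2 * pi * m) ` {-\<lceil>R\<rceil>..\<lceil>R\<rceil>}"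
  proof clarify
    fix m :: int assume "2 * pi * m \<in> {-R..R}"
    then have "\<bar>2 * pi * m\<bar> \<le> R" by auto
    moreover have "1 * \<bar>real_of_int m\<bar> \<le> (2 * pi) * \<bar>real_of_int m\<bar>"
      by (rule mult_right_mono) (use pi_gt3 in auto)
    ultimately have "\<bar>real_of_int m\<bar> \<le> R" by (simp add: abs_mult)
    then have "m \<in> {-\<lceil>R\<rceil>..\<lceil>R\<rceil>}" by (auto simp: abs_le_iff) linarith+
    then show "2 * pi * m \<in> (\<lambda>m::int. 2 * pi * m) ` {-\<lceil>R\<rceil>..\<lceil>R\<rceil>}" by blast
  qed
qed simp

lemma has_real_derivative_power_div:
  "((\<lambda>x. x ^ (b + 1) / (real b + 1)) has_real_derivative t ^ b) (at t)"
  using DERIV_cdivide[OF DERIV_pow[of "b + 1" t], of "real b + 1"] by (simp add: add.commute)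

lemma word_integral_by_parts:
  "x ^ (b + 1) / (real b + 1) * word_integral (p # w) x =
    word_integral ((b, 0) # p # w) x +
    integrate_letter p (\<lambda>t. t ^ (b + 1) / (real b + 1) * word_integral w t) x"
proof -
  have "x ^ (b + 1) / (real b + 1) * (LBINT t=ereal 0..ereal x. letter p t * word_integral w t) =
    (LBINT t=ereal 0..ereal x. t ^ b * (LBINT s=ereal 0..ereal t. letter p s * word_integral w s)) +
    (LBINT t=ereal 0..ereal x. t ^ (b + 1) / (real b + 1) * (letter p t * word_integral w t))"
  proof (rule indefinite_LBINT_by_parts[where Z = "range (\<lambda>m::int. 2 * pi * m)"])
    show "locally_integrable (\<lambda>t. letter p t * word_integral w t)"
      by (intro locally_integrable_letter_mult continuous_on_word_integral)
    show "isCont (\<lambda>t. letter p t * word_integral w t) t" if "t \<notin> range (\<lambda>m::int. 2 * pi * m)" for t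
      using isCont_letter[OF that] continuous_on_word_integral[of w]
      by (intro continuous_intros) (auto simp: continuous_on_eq_continuous_at)
    show "((\<lambda>x. x ^ (b + 1) / (real b + 1)) has_real_derivative t ^ b) (at t)" for t
      by (rule has_real_derivative_power_div)
  qed (auto intro: finite_multiples_2pi_bounded continuous_intros)
  then show ?thesis
    by (simp add: word_integral_Cons integrate_letter_def mult_ac)
qed

lemma word_integral_single_power: "word_integral [(b, 0)] = (\<lambda>x. x ^ (b + 1) / (real b + 1))"
proof
  fix x :: real
  have "(LBINT t=ereal 0..ereal x. t ^ b) = x ^ (b + 1) / (real b + 1) - 0 ^ (b + 1) / (real b + 1)"
  proof (rule interval_integral_FTC_finite)
    fix t :: real
    from has_real_derivative_power_div[of b t]
    show "((\<lambda>x. x ^ (b + 1) / (real b + 1)) has_vector_derivative t ^ b)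
        (at t within {min 0 x..max 0 x})"
      by (simp add: has_real_derivative_iff_has_vector_derivative has_vector_derivative_at_within)
  qed (intro continuous_intros)
  then show "word_integral [(b, 0)] x = x ^ (b + 1) / (real b + 1)"
    by (simp add: word_integral_Cons integrate_letter_def)
qed

lemma word_integral_pure_power_Cons:
  "word_integral ((b, 0) # (a, j) # w) x =
    x ^ (b + 1) / (real b + 1) * word_integral ((a, j) # w) x -
    word_integral ((a + (b + 1), j) # w) x / (real b + 1)"
proof -
  have "integrate_letter (a, j) (\<lambda>t. t ^ (b + 1) / (real b + 1) * word_integral w t) x =
      integrate_letter (a, j) (\<lambda>t. 1 / (real b + 1) * (t ^ (b + 1) * word_integral w t)) x"
    by simp
  also have "\<dots> = word_integral ((a + (b + 1), j) # w) x / (real b + 1)"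
    by (simp only: integrate_letter_scale integrate_letter_power_mult word_integral_Cons) simp
  finally show ?thesis using word_integral_by_parts[of x b "(a, j)" w] by simp
qed

section \<open>Rational spans\<close>

lemma qspan_zero: "0 \<in> qspan S"
  unfolding qspan_def by (rule CollectI, rule exI[of _ "{}"]) auto

lemma qspan_generator: "x \<in> S \<Longrightarrow> x \<in> qspan S"
  unfolding qspan_def by (rule CollectI, rule exI[of _ "{x}"], rule exI[of _ "\<lambda>_. 1"]) auto

lemma qspan_add:
  assumes "x \<in> qspan S" "y \<in> qspan S"
  shows "x + y \<in> qspan S"
proof -
  obtain F c where F: "finite F" "F \<subseteq> S" "\<forall>s\<in>F. c s \<in> \<rat>" "x = (\<Sum>s\<in>F. c s * s)"
    using assms(1) unfolding qspan_def by blast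
  obtain G d where G: "finite G" "G \<subseteq> S" "\<forall>s\<in>G. d s \<in> \<rat>" "y = (\<Sum>s\<in>G. d s * s)"
    using assms(2) unfolding qspan_def by blast
  define e where "e s = (if s \<in> F then c s else 0) + (if s \<in> G then d s else 0)" for s
  have "(\<Sum>s\<in>F \<union> G. e s * s) = (\<Sum>s\<in>F \<union> G. if s \<in> F then c s * s else 0) +
      (\<Sum>s\<in>F \<union> G. if s \<in> G then d s * s else 0)"
    unfolding sum.distrib[symmetric] by (intro sum.cong) (auto simp: e_def distrib_right)
  also have "\<dots> = x + y"
    using F G by (simp add: sum.inter_restrict[symmetric] Int_absorb1)
  finally show ?thesis
    using F G unfolding qspan_def
    by (intro CollectI exI[of _ "F \<union> G"] exI[of _ e]) (auto simp: e_def)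
qed

lemma qspan_scale:
  assumes "x \<in> qspan S" "a \<in> \<rat>"
  shows "a * x \<in> qspan S"
proof -
  obtain F c where F: "finite F" "F \<subseteq> S" "\<forall>s\<in>F. c s \<in> \<rat>" "x = (\<Sum>s\<in>F. c s * s)"
    using assms(1) unfolding qspan_def by blast
  then have "a * x = (\<Sum>s\<in>F. (a * c s) * s)" by (simp add: sum_distrib_left mult.assoc)
  then show ?thesis
    using F assms(2) unfolding qspan_def by (intro CollectI exI[of _ F] exI[of _ "\<lambda>s. a * c s"]) auto
qed

lemma qspan_subset: "S \<subseteq> qspan T \<Longrightarrow> qspan S \<subseteq> qspan T"
  unfolding qspan_def[of S]
proof clarify
  fix F and c :: "real \<Rightarrow> real"
  assume "S \<subseteq> qspan T" "finite F" "F \<subseteq> S" "\<forall>s\<in>F. c s \<in> \<rat>"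
  from \<open>finite F\<close> \<open>F \<subseteq> S\<close> \<open>\<forall>s\<in>F. c s \<in> \<rat>\<close> show "(\<Sum>s\<in>F. c s * s) \<in> qspan T"
    by (induction F rule: finite_induct)
       (use \<open>S \<subseteq> qspan T\<close> in \<open>auto intro!: qspan_zero qspan_add qspan_scale\<close>)
qed

lemma qspan_sign_iff: "(-1) ^ n * x \<in> qspan S \<longleftrightarrow> x \<in> qspan S"
  using qspan_scale[of x S "(-1) ^ n"] qspan_scale[of "(-1) ^ n * x" S "(-1) ^ n"]
  by (auto simp flip: power_mult_distrib)

text \<open>The reduction identities hold between functions, not just between their values at \<open>\<sigma>\<close>,
  because they are integrated again against further letters.\<close>
inductive_set fun_qspan :: "(real \<Rightarrow> real) set \<Rightarrow> (real \<Rightarrow> real) set" for B where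
  zero: "(\<lambda>_. 0) \<in> fun_qspan B"
| add: "b \<in> B \<Longrightarrow> c \<in> \<rat> \<Longrightarrow> f \<in> fun_qspan B \<Longrightarrow> (\<lambda>x. c * b x + f x) \<in> fun_qspan B"

lemma fun_qspan_scaled_generator: "b \<in> B \<Longrightarrow> c \<in> \<rat> \<Longrightarrow> (\<lambda>x. c * b x) \<in> fun_qspan B"
  using fun_qspan.add[OF _ _ fun_qspan.zero] by fastforce

lemma fun_qspan_generator: "b \<in> B \<Longrightarrow> b \<in> fun_qspan B"
  using fun_qspan_scaled_generator[of b B 1] by simp

lemma fun_qspan_add: "f \<in> fun_qspan B \<Longrightarrow> g \<in> fun_qspan B \<Longrightarrow> (\<lambda>x. f x + g x) \<in> fun_qspan B"
  by (induction f rule: fun_qspan.induct) (auto simp: add.assoc intro: fun_qspan.add)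

lemma fun_qspan_scale: "f \<in> fun_qspan B \<Longrightarrow> c \<in> \<rat> \<Longrightarrow> (\<lambda>x. c * f x) \<in> fun_qspan B"
proof (induction f rule: fun_qspan.induct)
  case (add b c' f)
  then have "(\<lambda>x. (c * c') * b x + c * f x) \<in> fun_qspan B" by (intro fun_qspan.add) auto
  then show ?case by (simp add: algebra_simps)
qed (simp add: fun_qspan.zero)

lemma fun_qspan_subset: "f \<in> fun_qspan B \<Longrightarrow> B \<subseteq> fun_qspan C \<Longrightarrow> f \<in> fun_qspan C"
proof (induction f rule: fun_qspan.induct)
  case (add b c f)
  then show ?case using fun_qspan_add[OF fun_qspan_scale[of b C c]] by blast
qed (rule fun_qspan.zero)

lemma fun_qspan_continuous:
  "f \<in> fun_qspan B \<Longrightarrow> (\<And>b. b \<in> B \<Longrightarrow> continuous_on UNIV b) \<Longrightarrow> continuous_on UNIV f"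
  by (induction f rule: fun_qspan.induct) (auto intro!: continuous_intros)

lemma fun_qspan_image:
  assumes "f \<in> fun_qspan B" "T (\<lambda>_. 0) = (\<lambda>_. 0)"
    and "\<And>b c g. b \<in> B \<Longrightarrow> c \<in> \<rat> \<Longrightarrow> g \<in> fun_qspan B \<Longrightarrow>
      T (\<lambda>x. c * b x + g x) = (\<lambda>x. c * T b x + T g x)"
  shows "T f \<in> fun_qspan (T ` B)"
  using assms(1) by induction (auto simp: assms(2,3) intro: fun_qspan.intros)

lemma fun_qspan_eval:
  "f \<in> fun_qspan B \<Longrightarrow> (\<And>b. b \<in> B \<Longrightarrow> b \<sigma> \<in> qspan S) \<Longrightarrow> f \<sigma> \<in> qspan S"
  by (induction f rule: fun_qspan.induct) (auto intro: qspan_zero qspan_add qspan_scale)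

section \<open>Reduction and expansion preserving weight and \<open>A\<close>-degree\<close>

fun weight :: "word \<Rightarrow> nat" where
  "weight [] = 0"
| "weight ((a, j) # w) = a + j + 1 + weight w"

fun A_degree :: "word \<Rightarrow> nat" where
  "A_degree [] = 0"
| "A_degree ((a, j) # w) = j + A_degree w"

fun A_positive :: "word \<Rightarrow> bool" where
  "A_positive [] = True"
| "A_positive ((a, j) # w) \<longleftrightarrow> 0 < j \<and> A_positive w"

lemma integrate_letter_fun_qspan:
  assumes "\<And>b. b \<in> B \<Longrightarrow> continuous_on UNIV b" "f \<in> fun_qspan B"
  shows "integrate_letter p f \<in> fun_qspan (integrate_letter p ` B)"
  using assms(2)
proof (rule fun_qspan_image)
  show "integrate_letter p (\<lambda>_. 0) = (\<lambda>_. 0)" by (simp add: integrate_letter_def[abs_def])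
  show "integrate_letter p (\<lambda>x. c * b x + g x) = (\<lambda>x. c * integrate_letter p b x + integrate_letter p g x)"
    if "b \<in> B" "g \<in> fun_qspan B" for b c g
    using that assms(1) fun_qspan_continuous[OF _ assms(1)]
    by (simp add: fun_eq_iff integrate_letter_linear)
qed

definition L_generators :: "nat \<Rightarrow> nat \<Rightarrow> (real \<Rightarrow> real) set" where
  "L_generators n s = {word_integral w | w. weight w = n \<and> A_degree w = s}"

definition M_generators :: "nat \<Rightarrow> nat \<Rightarrow> (real \<Rightarrow> real) set" where
  "M_generators n s = {(\<lambda>x. x ^ m * word_integral w x) | m w.
     A_positive w \<and> m + weight w = n \<and> A_degree w = s}"

lemma continuous_on_M_generators: "b \<in> M_generators n s \<Longrightarrow> continuous_on UNIV b"
  by (auto simp: M_generators_def intro!: continuous_intros continuous_on_word_integral)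

lemma continuous_on_L_generators: "b \<in> L_generators n s \<Longrightarrow> continuous_on UNIV b"
  by (auto simp: L_generators_def intro: continuous_on_word_integral)

lemma word_integral_in_M_generators:
  "A_positive w \<Longrightarrow> word_integral w \<in> M_generators (weight w) (A_degree w)"
  unfolding M_generators_def by (rule CollectI, rule exI[of _ 0]) auto

lemma pure_power_Cons_in_fun_qspan_M_generators:
  assumes "A_positive w"
  shows "word_integral ((b, 0) # w) \<in> fun_qspan (M_generators (b + 1 + weight w) (A_degree w))"
proof (cases w)
  case Nil
  have "(\<lambda>x. x ^ (b + 1) * word_integral [] x) \<in> M_generators (b + 1) 0"
    unfolding M_generators_def by (intro CollectI exI[of _ "b + 1"] exI[of _ "[]"]) auto
  from fun_qspan_scaled_generator[OF this, of "1 / (real b + 1)"]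
  show ?thesis by (simp add: Nil fun_eq_iff word_integral_single_power)
next
  case (Cons p w')
  obtain a j where p: "p = (a, j)" by fastforce
  let ?M = "M_generators (b + 1 + weight w) (A_degree w)"
  let ?f = "\<lambda>x. 1 / (real b + 1) * (x ^ (b + 1) * word_integral w x) +
    - 1 / (real b + 1) * word_integral ((a + (b + 1), j) # w') x"
  have "(\<lambda>x. x ^ (b + 1) * word_integral w x) \<in> ?M"
    using assms unfolding M_generators_def by (intro CollectI exI[of _ "b + 1"] exI[of _ w]) auto
  moreover have "word_integral ((a + (b + 1), j) # w') \<in> ?M"
    using word_integral_in_M_generators[of "(a + (b + 1), j) # w'"] assms
    by (simp add: Cons p ac_simps)
  ultimately have "?f \<in> fun_qspan ?M"
    by (intro fun_qspan_add fun_qspan_scaled_generator) auto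
  moreover have "word_integral ((b, 0) # w) = ?f"
    by (rule ext) (simp add: Cons p word_integral_pure_power_Cons field_simps)
  ultimately show ?thesis by simp
qed

lemma integrate_letter_M_generator:
  assumes "g \<in> M_generators n s"
  shows "integrate_letter (a, j) g \<in> fun_qspan (M_generators (a + j + 1 + n) (j + s))"
proof -
  obtain m w where g: "g = (\<lambda>x. x ^ m * word_integral w x)" and w: "A_positive w"
    "m + weight w = n" "A_degree w = s"
    using assms unfolding M_generators_def by blast
  have integral: "integrate_letter (a, j) g = word_integral ((a + m, j) # w)"
    by (simp add: g integrate_letter_power_mult word_integral_Cons)
  have weights: "a + j + 1 + n = weight ((a + m, j) # w)" "j + s = A_degree ((a + m, j) # w)"
    using w by simp_all
  have "word_integral ((a + m, j) # w) \<in>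
      fun_qspan (M_generators (weight ((a + m, j) # w)) (A_degree ((a + m, j) # w)))"
    using pure_power_Cons_in_fun_qspan_M_generators[OF w(1), of "a + m"]
      word_integral_in_M_generators[of "(a + m, j) # w"] w(1)
    by (cases "j = 0") (auto intro: fun_qspan_generator)
  then show ?thesis unfolding integral weights .
qed

lemma word_integral_in_fun_qspan_M_generators:
  "word_integral w \<in> fun_qspan (M_generators (weight w) (A_degree w))"
proof (induction w)
  case Nil
  show ?case
    using fun_qspan_generator[OF word_integral_in_M_generators[of "[]"]] by simp
next
  case (Cons p w)
  obtain a j where p: "p = (a, j)" by fastforce
  let ?M = "M_generators (weight w) (A_degree w)"
  have "integrate_letter p (word_integral w) \<in> fun_qspan (integrate_letter p ` ?M)"
    using Cons.IH by (intro integrate_letter_fun_qspan continuous_on_M_generators)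
  moreover have "integrate_letter p ` ?M \<subseteq> fun_qspan (M_generators (weight (p # w)) (A_degree (p # w)))"
    using integrate_letter_M_generator by (auto simp: p)
  ultimately show ?case by (simp add: word_integral_Cons fun_qspan_subset)
qed

lemma power_mult_word_integral_in_fun_qspan_L_generators:
  "(\<lambda>x. x ^ (b + 1) / (real b + 1) * word_integral w x) \<in>
    fun_qspan (L_generators (b + 1 + weight w) (A_degree w))"
proof (induction w)
  case Nil
  have "word_integral [(b, 0)] \<in> L_generators (b + 1) 0"
    unfolding L_generators_def by auto
  from fun_qspan_generator[OF this] show ?case by (simp add: word_integral_single_power)
next
  case (Cons p w)
  obtain a j where p: "p = (a, j)" by fastforce
  let ?L = "L_generators (b + 1 + weight (p # w)) (A_degree (p # w))"
  let ?f = "\<lambda>t. t ^ (b + 1) / (real b + 1) * word_integral w t"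
  have "integrate_letter p ?f \<in> fun_qspan (integrate_letter p ` L_generators (b + 1 + weight w) (A_degree w))"
    using Cons.IH by (intro integrate_letter_fun_qspan continuous_on_L_generators)
  moreover have "integrate_letter p ` L_generators (b + 1 + weight w) (A_degree w) \<subseteq> ?L"
    by (auto simp: L_generators_def p word_integral_Cons[symmetric])
  ultimately have integral: "integrate_letter p ?f \<in> fun_qspan ?L"
    by (auto intro: fun_qspan_subset fun_qspan_generator)
  have generator: "word_integral ((b, 0) # p # w) \<in> ?L"
    unfolding L_generators_def by (auto simp: p)
  have "(\<lambda>x. x ^ (b + 1) / (real b + 1) * word_integral (p # w) x) =
      (\<lambda>x. word_integral ((b, 0) # p # w) x + integrate_letter p ?f x)"
    by (rule ext) (rule word_integral_by_parts)
  then show ?case by (simp only: fun_qspan_add[OF fun_qspan_generator[OF generator] integral])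
qed

section \<open>Words and the index sets of \<open>Ls\<close>\<close>

lemma weight_append [simp]: "weight (v @ w) = weight v + weight w"
  by (induction v rule: weight.induct) auto

lemma A_degree_append [simp]: "A_degree (v @ w) = A_degree v + A_degree w"
  by (induction v rule: A_degree.induct) auto

lemma A_positive_append [simp]: "A_positive (v @ w) \<longleftrightarrow> A_positive v \<and> A_positive w"
  by (induction v rule: A_positive.induct) auto

lemma length_le_weight: "length w \<le> weight w"
  by (induction w rule: weight.induct) auto

text \<open>\<open>Ls ks ls\<close> is, up to sign, the integral of the word with letters
  \<open>(l\<^sub>u, k\<^sub>u - 1 - l\<^sub>u)\<close> in reverse order, since \<open>itint\<close> takes the outermost integrand first.\<close>
definition word_of :: "nat list \<Rightarrow> nat list \<Rightarrow> word" where
  "word_of ks ls = rev (map (\<lambda>(k, l). (l, k - 1 - l)) (zip ks ls))"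

definition ks_of :: "word \<Rightarrow> nat list" where
  "ks_of w = map (\<lambda>(a, j). a + j + 1) (rev w)"

definition ls_of :: "word \<Rightarrow> nat list" where
  "ls_of w = map fst (rev w)"

lemma Ls_eq_word_integral: "Ls ks ls \<sigma> = (-1) ^ length ks * word_integral (word_of ks ls) \<sigma>"
proof -
  have "(\<lambda>(k, l). lsint k l) = letter \<circ> (\<lambda>(k, l). (l, k - 1 - l))"
    by (auto simp: lsint_def fun_eq_iff)
  then show ?thesis by (simp add: Ls_def word_integral_def word_of_def rev_map)
qed

lemma sdeg_Nil: "sdeg [] [] = 0"
  by (simp add: sdeg_def)

lemma sdeg_Cons: "sdeg (k # ks) (l # ls) = (k - 1 - l) + sdeg ks ls"
  unfolding sdeg_def length_Cons sum.lessThan_Suc_shift by simp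

lemma word_of_Nil: "word_of [] [] = []"
  by (simp add: word_of_def)

lemma word_of_Cons: "word_of (k # ks) (l # ls) = word_of ks ls @ [(l, k - 1 - l)]"
  by (simp add: word_of_def)

lemma
  assumes "length ks = length ls" "\<forall>u<length ks. ls ! u < ks ! u"
  shows weight_word_of: "weight (word_of ks ls) = sum_list ks"
    and A_degree_word_of: "A_degree (word_of ks ls) = sdeg ks ls"
    and A_positive_word_of: "A_positive (word_of ks ls) \<longleftrightarrow> (\<forall>u<length ks. ls ! u + 2 \<le> ks ! u)"
  using assms
  by (induction ks ls rule: list_induct2) (auto simp: word_of_Nil word_of_Cons sdeg_Nil sdeg_Cons All_less_Suc2)

lemma length_word_of: "length ks = length ls \<Longrightarrow> length (word_of ks ls) = length ks"
  by (simp add: word_of_def)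

lemma word_of_ks_of_ls_of: "word_of (ks_of w) (ls_of w) = w"
  by (induction w rule: rev_induct) (auto simp: word_of_def ks_of_def ls_of_def)

lemma
  shows length_ks_of: "length (ks_of w) = length w"
    and length_ls_of: "length (ls_of w) = length w"
    and ls_of_less_ks_of: "\<forall>u<length w. ls_of w ! u < ks_of w ! u"
  by (auto simp: ks_of_def ls_of_def case_prod_beta)

lemma Lset_eq_words:
  "Lset p k d \<sigma> = {(-1) ^ length w * word_integral w \<sigma> | w.
     weight w = k \<and> A_degree w \<le> d \<and> odd (A_degree w) = p}"
proof (intro equalityI subsetI)
  fix v assume "v \<in> Lset p k d \<sigma>"
  then obtain ks ls where v: "v = Ls ks ls \<sigma>" and ks: "length ls = length ks" "sum_list ks = k"
    "\<forall>u<length ks. ls ! u < ks ! u" "sdeg ks ls \<le> d" "odd (sdeg ks ls) = p"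
    unfolding Lset_def by fastforce
  then show "v \<in> {(-1) ^ length w * word_integral w \<sigma> | w.
      weight w = k \<and> A_degree w \<le> d \<and> odd (A_degree w) = p}"
    by (intro CollectI exI[of _ "word_of ks ls"])
       (simp add: Ls_eq_word_integral length_word_of weight_word_of A_degree_word_of)
next
  fix v assume "v \<in> {(-1) ^ length w * word_integral w \<sigma> | w.
      weight w = k \<and> A_degree w \<le> d \<and> odd (A_degree w) = p}"
  then obtain w where v: "v = (-1) ^ length w * word_integral w \<sigma>"
    and w: "weight w = k" "A_degree w \<le> d" "odd (A_degree w) = p" by blast
  have "Ls (ks_of w) (ls_of w) \<sigma> \<in> Lset p k d \<sigma>"
    unfolding Lset_def
    using w length_le_weight[of w] ls_of_less_ks_of[of w]
      weight_word_of[of "ks_of w" "ls_of w"] A_degree_word_of[of "ks_of w" "ls_of w"]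
    by (intro CollectI exI conjI refl) (auto simp: length_ks_of length_ls_of word_of_ks_of_ls_of)
  then show "v \<in> Lset p k d \<sigma>"
    by (simp add: v Ls_eq_word_integral length_ks_of word_of_ks_of_ls_of)
qed

lemma Mset_eq_words:
  "Mset p k d \<sigma> = {(-1) ^ length w * (\<sigma> ^ m * word_integral w \<sigma>) | m w.
     A_positive w \<and> m + weight w = k \<and> A_degree w \<le> d \<and> odd (A_degree w) = p}"
proof (intro equalityI subsetI)
  fix v assume "v \<in> Mset p k d \<sigma>"
  then obtain m ks ls where v: "v = \<sigma> ^ m * Ls ks ls \<sigma>" and ks: "length ls = length ks"
    "m + sum_list ks = k" "\<forall>u<length ks. ls ! u + 2 \<le> ks ! u" "sdeg ks ls \<le> d" "odd (sdeg ks ls) = p"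
    unfolding Mset_def by fastforce
  then have "\<forall>u<length ks. ls ! u < ks ! u" by fastforce
  with v ks show "v \<in> {(-1) ^ length w * (\<sigma> ^ m * word_integral w \<sigma>) | m w.
      A_positive w \<and> m + weight w = k \<and> A_degree w \<le> d \<and> odd (A_degree w) = p}"
    by (intro CollectI exI[of _ m] exI[of _ "word_of ks ls"])
       (simp add: Ls_eq_word_integral length_word_of weight_word_of A_degree_word_of A_positive_word_of)
next
  fix v assume "v \<in> {(-1) ^ length w * (\<sigma> ^ m * word_integral w \<sigma>) | m w.
      A_positive w \<and> m + weight w = k \<and> A_degree w \<le> d \<and> odd (A_degree w) = p}"
  then obtain m w where v: "v = (-1) ^ length w * (\<sigma> ^ m * word_integral w \<sigma>)"
    and w: "A_positive w" "m + weight w = k" "A_degree w \<le> d" "odd (A_degree w) = p" by blast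
  have "\<sigma> ^ m * Ls (ks_of w) (ls_of w) \<sigma> \<in> Mset p k d \<sigma>"
    unfolding Mset_def
    using w length_le_weight[of w] ls_of_less_ks_of[of w]
      weight_word_of[of "ks_of w" "ls_of w"] A_degree_word_of[of "ks_of w" "ls_of w"]
      A_positive_word_of[of "ks_of w" "ls_of w"]
    by (intro CollectI exI conjI refl) (auto simp: length_ks_of length_ls_of word_of_ks_of_ls_of)
  then show "v \<in> Mset p k d \<sigma>"
    by (simp add: v Ls_eq_word_integral length_ks_of word_of_ks_of_ls_of mult.left_commute)
qed

lemma word_integral_in_qspan_Lset:
  assumes "weight w = k" "A_degree w \<le> d" "odd (A_degree w) = p"
  shows "word_integral w \<sigma> \<in> qspan (Lset p k d \<sigma>)"
proof -
  have "(-1) ^ length w * word_integral w \<sigma> \<in> Lset p k d \<sigma>"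
    using assms unfolding Lset_eq_words by blast
  then show ?thesis using qspan_generator qspan_sign_iff by blast
qed

lemma power_mult_word_integral_in_qspan_Mset:
  assumes "A_positive w" "m + weight w = k" "A_degree w \<le> d" "odd (A_degree w) = p"
  shows "\<sigma> ^ m * word_integral w \<sigma> \<in> qspan (Mset p k d \<sigma>)"
proof -
  have "(-1) ^ length w * (\<sigma> ^ m * word_integral w \<sigma>) \<in> Mset p k d \<sigma>"
    using assms unfolding Mset_eq_words by blast
  then show ?thesis using qspan_generator qspan_sign_iff by blast
qed

lemma Lset_subset_qspan_Mset: "Lset p k d \<sigma> \<subseteq> qspan (Mset p k d \<sigma>)"
proof
  fix v assume "v \<in> Lset p k d \<sigma>"
  then obtain w where v: "v = (-1) ^ length w * word_integral w \<sigma>"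
    and w: "weight w = k" "A_degree w \<le> d" "odd (A_degree w) = p"
    unfolding Lset_eq_words by blast
  have "word_integral w \<sigma> \<in> qspan (Mset p k d \<sigma>)"
  proof (rule fun_qspan_eval[OF word_integral_in_fun_qspan_M_generators])
    fix b assume "b \<in> M_generators (weight w) (A_degree w)"
    then show "b \<sigma> \<in> qspan (Mset p k d \<sigma>)"
      using w power_mult_word_integral_in_qspan_Mset unfolding M_generators_def by auto
  qed
  then show "v \<in> qspan (Mset p k d \<sigma>)" by (simp add: v qspan_sign_iff)
qed

lemma Mset_subset_qspan_Lset: "Mset p k d \<sigma> \<subseteq> qspan (Lset p k d \<sigma>)"
proof
  fix v assume "v \<in> Mset p k d \<sigma>"
  then obtain m w where v: "v = (-1) ^ length w * (\<sigma> ^ m * word_integral w \<sigma>)"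
    and w: "m + weight w = k" "A_degree w \<le> d" "odd (A_degree w) = p"
    unfolding Mset_eq_words by blast
  have "\<sigma> ^ m * word_integral w \<sigma> \<in> qspan (Lset p k d \<sigma>)"
  proof (cases m)
    case 0
    then show ?thesis using w word_integral_in_qspan_Lset by simp
  next
    case (Suc b)
    have "\<sigma> ^ (b + 1) / (real b + 1) * word_integral w \<sigma> \<in> qspan (Lset p k d \<sigma>)"
    proof (rule fun_qspan_eval[OF power_mult_word_integral_in_fun_qspan_L_generators])
      fix g assume "g \<in> L_generators (b + 1 + weight w) (A_degree w)"
      then show "g \<sigma> \<in> qspan (Lset p k d \<sigma>)"
        using w Suc word_integral_in_qspan_Lset unfolding L_generators_def by auto
    qed
    from qspan_scale[OF this, of "real b + 1"] show ?thesis
      by (simp add: Suc Rats_add)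
  qed
  then show "v \<in> qspan (Lset p k d \<sigma>)" by (simp add: v qspan_sign_iff)
qed

theorem theorem8:
  fixes \<sigma> :: real and k d :: nat
  shows "qspan (Lset True k d \<sigma>) = qspan (Mset True k d \<sigma>) \<and>
         qspan (Lset False k d \<sigma>) = qspan (Mset False k d \<sigma>)"
  using qspan_subset[OF Lset_subset_qspan_Mset] qspan_subset[OF Mset_subset_qspan_Lset]
  by blast

end
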